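(* Let $A>0$ (area of the subregion), $E_{\rm b}>0$ (battery capacity), $P_{\rm c}>0$ (on-board circuit power), $\lambda>0$, $S>0$, and suppose $h_{\rm n}^*\ge0$ minimizes $\Gamma$ on $[0,\infty)$. For $R>0$ and $h\ge0$ define the UAV recall frequency $$\Phi(R,h)=\frac{A}{\pi R^2}\cdot\frac{P_{\rm t}(R,\lambda,h,S)+P_{\rm c}}{E_{\rm b}}.$$ Then for all $R>0$, $h\ge 0$, $$\Phi(R,h)\ \ge\ \frac{2A}{\pi E_{\rm b}}\sqrt{\lambda(2^S-1)\,P_{\rm c}\,\Gamma(h_{\rm n}^* )},$$ and equality holds at $(R^*,h^* )$ with $$R^*=\sqrt[4]{\frac{P_{\rm c}}{\lambda(2^S-1)\,\Gamma(h_{\rm n}^* )}},\qquad h^*=R^*h_{\rm n}^*.$$ Consequently, for a region split into subregions $\beta=1,\dots,\kappa$ with parameters $A(\beta),\lambda(\beta)$ (and common $E_{\rm b},P_{\rm c},S$), the total $\sum_{\beta}\Phi_\beta(R(\beta),h(\beta))$ is minimized over $R(\beta)>0,h(\beta)\ge0$ by choosing $(R(\beta),h(\beta))=(R^*(\beta),R^*(\beta)h_{\rm n}^* )$ in each subregion, with $R^*(\beta)$ given by the formula above with $\lambda=\lambda(\beta)$.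
   Context: Fix constants $f_{\rm c}>0$, $c>0$, $N_0>0$, $\eta_0>0,\eta_1>0$, $a>0$, $b>0$. For $r>0$, $h\ge 0$, let $\theta(r,h)=\frac{180}{\pi}\arctan(h/r)$, $P_0(r,h)=\dfrac{1}{1+a\exp(-b[\theta(r,h)-a])}$, and $$\bar L(r,h)=\left(\frac{4\pi f_{\rm c}}{c}\right)^2 (r^2+h^2)\,\big(\eta_1+P_0(r,h)(\eta_0-\eta_1)\big).$$ For $R>0$, $\lambda>0$, $h\ge0$, $S>0$, the transmit power is $P_{\rm t}(R,\lambda,h,S)=\lambda\int_0^R 2\pi r\,\bar L(r,h)\,N_0\,(2^S-1)\,dr$, and the kernel function is $\Gamma(x):=P_{\rm t}(1,1,x,1)=\int_0^1 2\pi r\,\bar L(r,x)\,N_0\,dr$ for $x\ge0$. The number of UAVs covering a subregion of area $A$ with coverage radius $R$ is $A/(\pi R^2)$; $\Phi_\beta$ denotes $\Phi$ computed with the parameters $A(\beta),\lambda(\beta)$ of subregion $\beta$. *)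

theory Defs
  imports "HOL-Analysis.Analysis"
begin

definition elev_angle :: "real \<Rightarrow> real \<Rightarrow> real" where
  "elev_angle r h = (180 / pi) * arctan (h / r)"

definition P0 :: "real \<Rightarrow> real \<Rightarrow> real \<Rightarrow> real \<Rightarrow> real" where
  "P0 a b r h = 1 / (1 + a * exp (- b * (elev_angle r h - a)))"

definition Lbar :: "real \<Rightarrow> real \<Rightarrow> real \<Rightarrow> real \<Rightarrow> real \<Rightarrow> real \<Rightarrow> real \<Rightarrow> real \<Rightarrow> real" where
  "Lbar fc c eta0 eta1 a b r h =
     (4 * pi * fc / c)^2 * (r^2 + h^2) * (eta1 + P0 a b r h * (eta0 - eta1))"

definition Pt :: "real \<Rightarrow> real \<Rightarrow> real \<Rightarrow> real \<Rightarrow> real \<Rightarrow> real \<Rightarrow> real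
                  \<Rightarrow> real \<Rightarrow> real \<Rightarrow> real \<Rightarrow> real \<Rightarrow> real" where
  "Pt fc c N0 eta0 eta1 a b R lam h S =
     lam * integral {0..R} (\<lambda>r. 2 * pi * r * Lbar fc c eta0 eta1 a b r h * N0 * (2 powr S - 1))"

definition Gam :: "real \<Rightarrow> real \<Rightarrow> real \<Rightarrow> real \<Rightarrow> real \<Rightarrow> real \<Rightarrow> real \<Rightarrow> real \<Rightarrow> real" where
  "Gam fc c N0 eta0 eta1 a b x = Pt fc c N0 eta0 eta1 a b 1 1 x 1"

definition Phi :: "real \<Rightarrow> real \<Rightarrow> real \<Rightarrow> real \<Rightarrow> real \<Rightarrow> real \<Rightarrow> real
                   \<Rightarrow> real \<Rightarrow> real \<Rightarrow> real \<Rightarrow> real \<Rightarrow> real \<Rightarrow> real \<Rightarrow> real \<Rightarrow> real" where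
  "Phi fc c N0 eta0 eta1 a b A Eb Pc lam S R h =
     (A / (pi * R^2)) * ((Pt fc c N0 eta0 eta1 a b R lam h S + Pc) / Eb)"

definition Ropt :: "real \<Rightarrow> real \<Rightarrow> real \<Rightarrow> real \<Rightarrow> real \<Rightarrow> real \<Rightarrow> real
                    \<Rightarrow> real \<Rightarrow> real \<Rightarrow> real \<Rightarrow> real \<Rightarrow> real" where
  "Ropt fc c N0 eta0 eta1 a b Pc lam S hn =
     root 4 (Pc / (lam * (2 powr S - 1) * Gam fc c N0 eta0 eta1 a b hn))"

end

theory Submission
  imports Defs
begin

text \<open>Substituting r = R t shows that P_t(R, \<lambda>, h, S) = \<lambda> (2^S - 1) R^4 \<Gamma>(h/R), so that
  \<Phi>(R, h) is a positive multiple of \<lambda> (2^S - 1) \<Gamma>(h/R) R^2 + P_c / R^2.  Replacing \<Gamma>(h/R) by its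
  minimum \<Gamma>(h_n^*) only decreases this, and AM-GM in the variable R^2 bounds the result below by
  2 sqrt(\<lambda> (2^S - 1) P_c \<Gamma>(h_n^*)), with equality exactly at R^2 = sqrt(P_c / (\<lambda> (2^S - 1) \<Gamma>(h_n^*))).
  The subregions are decoupled, so the total is minimised term by term.\<close>

lemma integral_rescale_unit_interval:
  fixes f :: "real \<Rightarrow> real"
  assumes "R > 0"
  shows "integral {0..R} f = R * integral {0..1} (\<lambda>t. f (R * t))"
proof -
  have "bij_betw (\<lambda>x. x / R) {0..R} {0..1}"
    by (rule bij_betwI[of _ _ _ "\<lambda>x. x * R"]) (use assms in \<open>auto simp: field_simps\<close>)
  then have "(\<lambda>x. x / R) ` {0..R} = {0..1}"
    by (simp add: bij_betw_def)
  then show ?thesis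
    using integral_stretch_real[of R 0 R f] assms by simp
qed

lemma Lbar_scale:
  assumes "R \<noteq> 0"
  shows "Lbar fc c eta0 eta1 a b (R * t) h = R^2 * Lbar fc c eta0 eta1 a b t (h / R)"
proof -
  have "P0 a b (R * t) h = P0 a b t (h / R)"
    by (simp add: P0_def elev_angle_def)
  moreover have "(R * t)^2 + h^2 = R^2 * (t^2 + (h / R)^2)"
    using assms by (simp add: field_simps)
  ultimately show ?thesis
    by (simp add: Lbar_def)
qed

lemma Pt_scale:
  assumes "R \<ge> 0"
  shows "Pt fc c N0 eta0 eta1 a b R lam h S
           = lam * (2 powr S - 1) * R^4 * Gam fc c N0 eta0 eta1 a b (h / R)"
proof (cases "R = 0")
  case True
  then show ?thesis by (simp add: Pt_def)
next
  case False
  with assms have R: "R > 0" by simp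
  let ?g = "\<lambda>t. 2 * pi * t * Lbar fc c eta0 eta1 a b t (h / R) * N0"
  have "integral {0..R} (\<lambda>r. 2 * pi * r * Lbar fc c eta0 eta1 a b r h * N0 * (2 powr S - 1))
      = R * integral {0..1} (\<lambda>t. ?g t * (R^3 * (2 powr S - 1)))"
    using integral_rescale_unit_interval[OF R] Lbar_scale[OF False]
    by (simp add: power_def algebra_simps)
  also have "\<dots> = R^4 * (2 powr S - 1) * integral {0..1} ?g"
    by (simp add: power_def)
  finally show ?thesis
    by (simp add: Pt_def Gam_def)
qed

lemma Gam_nonneg:
  assumes "N0 > 0" "eta0 > 0" "eta1 > 0" "a > 0"
  shows "Gam fc c N0 eta0 eta1 a b x \<ge> 0"
proof -
  have "eta1 + P0 a b r x * (eta0 - eta1) \<ge> 0" for r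
  proof -
    have "0 < P0 a b r x" "P0 a b r x \<le> 1"
      using assms by (auto simp: P0_def field_simps add_pos_pos)
    then have "0 \<le> (1 - P0 a b r x) * eta1 + P0 a b r x * eta0"
      using assms by (intro add_nonneg_nonneg mult_nonneg_nonneg) auto
    then show ?thesis by (simp add: algebra_simps)
  qed
  then have "Lbar fc c eta0 eta1 a b r x \<ge> 0" for r
    by (simp add: Lbar_def)
  then have "integral {0..1} (\<lambda>r. 2 * pi * r * Lbar fc c eta0 eta1 a b r x * N0 * 1) \<ge> 0"
    (is "integral _ ?f \<ge> 0")
  proof (cases "?f integrable_on {0..1}")
    case True
    then show ?thesis
      using \<open>\<And>r. Lbar fc c eta0 eta1 a b r x \<ge> 0\<close> assms(1) by (intro integral_nonneg) auto
  qed (metis not_integrable_integral order_refl)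
  then show ?thesis
    by (simp add: Gam_def Pt_def)
qed

lemma Phi_scale:
  assumes "R \<ge> 0"
  shows "Phi fc c N0 eta0 eta1 a b A Eb Pc lam S R h
           = A / (pi * Eb) * (lam * (2 powr S - 1) * Gam fc c N0 eta0 eta1 a b (h / R) * R^2 + Pc / R^2)"
  using assms by (cases "R = 0") (simp_all add: Phi_def Pt_scale field_simps power_def)

lemma two_sqrt_le_add_divide:
  fixes p q x :: real
  assumes "p \<ge> 0" "q \<ge> 0" "x > 0"
  shows "2 * sqrt (p * q) \<le> p * x + q / x"
proof -
  have "0 \<le> (sqrt p * x - sqrt q)^2 / x"
    using assms by simp
  also have "\<dots> = p * x + q / x - 2 * sqrt (p * q)"
    using assms by (simp add: power2_eq_square field_simps real_sqrt_mult)
  finally show ?thesis by simp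
qed

text \<open>Also valid for p = 0, where both sides vanish because q / 0 = 0.\<close>

lemma add_divide_at_sqrt_ratio:
  fixes p q :: real
  assumes "p \<ge> 0" "q \<ge> 0"
  shows "p * sqrt (q / p) + q / sqrt (q / p) = 2 * sqrt (p * q)"
proof (cases "p = 0 \<or> q = 0")
  case False
  with assms have "p > 0" "q > 0" by auto
  then have "p * sqrt (q / p) = sqrt (p * q)" "q / sqrt (q / p) = sqrt (p * q)"
    by (simp_all add: real_sqrt_divide real_sqrt_mult field_simps)
  then show ?thesis by simp
qed auto

lemma root4_power2:
  fixes y :: real
  assumes "y \<ge> 0"
  shows "(root 4 y)^2 = sqrt y"
proof -
  have "root 4 y = sqrt (sqrt y)"
    using real_root_mult_exp[of 2 2 y] by (simp add: sqrt_def)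
  then show ?thesis
    using assms by simp
qed

lemma Phi_ge_two_sqrt:
  assumes "N0 > 0" "eta0 > 0" "eta1 > 0" "a > 0"
    and "A \<ge> 0" "Eb \<ge> 0" "Pc \<ge> 0" "lam \<ge> 0" "S \<ge> 0"
    and hmin: "\<forall>x\<ge>0. Gam fc c N0 eta0 eta1 a b hn \<le> Gam fc c N0 eta0 eta1 a b x"
    and "R > 0" "h \<ge> 0"
  shows "2 * A / (pi * Eb) * sqrt (lam * (2 powr S - 1) * Pc * Gam fc c N0 eta0 eta1 a b hn)
           \<le> Phi fc c N0 eta0 eta1 a b A Eb Pc lam S R h"
proof -
  define k where "k = lam * (2 powr S - 1)"
  define G where "G = Gam fc c N0 eta0 eta1 a b hn"
  have k: "k \<ge> 0"
    using assms(8) ge_one_powr_ge_zero[of 2 S] assms(9) by (simp add: k_def)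
  have G: "G \<ge> 0"
    unfolding G_def using Gam_nonneg assms(1-4) by blast
  have "G \<le> Gam fc c N0 eta0 eta1 a b (h / R)"
    using hmin assms(11,12) by (simp add: G_def)
  then have "k * G * R^2 + Pc / R^2 \<le> k * Gam fc c N0 eta0 eta1 a b (h / R) * R^2 + Pc / R^2"
    using k by (simp add: mult_left_mono mult_right_mono)
  moreover have "2 * sqrt (k * G * Pc) \<le> k * G * R^2 + Pc / R^2"
    using two_sqrt_le_add_divide[of "k * G" Pc "R^2"] k G assms(7,11) by simp
  ultimately have "2 * sqrt (k * Pc * G) \<le> k * Gam fc c N0 eta0 eta1 a b (h / R) * R^2 + Pc / R^2"
    by (simp add: mult_ac)
  then have "A / (pi * Eb) * (2 * sqrt (k * Pc * G))
      \<le> A / (pi * Eb) * (k * Gam fc c N0 eta0 eta1 a b (h / R) * R^2 + Pc / R^2)"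
    using assms(5,6) by (intro mult_left_mono) auto
  then show ?thesis
    using assms(11) by (simp add: Phi_scale k_def G_def mult_ac)
qed

text \<open>No positivity of \<Gamma>(h_n^*) is needed: if it vanishes, then R^* = 0 by division by zero, and both
  sides are 0.\<close>

lemma Phi_Ropt:
  assumes "N0 > 0" "eta0 > 0" "eta1 > 0" "a > 0"
    and "Pc \<ge> 0" "lam \<ge> 0" "S \<ge> 0"
  shows "Phi fc c N0 eta0 eta1 a b A Eb Pc lam S
            (Ropt fc c N0 eta0 eta1 a b Pc lam S hn) (Ropt fc c N0 eta0 eta1 a b Pc lam S hn * hn)
           = 2 * A / (pi * Eb) * sqrt (lam * (2 powr S - 1) * Pc * Gam fc c N0 eta0 eta1 a b hn)"
proof -
  define Ro where "Ro = Ropt fc c N0 eta0 eta1 a b Pc lam S hn"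
  define k where "k = lam * (2 powr S - 1)"
  define G where "G = Gam fc c N0 eta0 eta1 a b hn"
  have "k \<ge> 0"
    using assms(6) ge_one_powr_ge_zero[of 2 S] assms(7) by (simp add: k_def)
  then have kG: "k * G \<ge> 0"
    using Gam_nonneg[OF assms(1-4)] by (simp add: G_def)
  have Ro: "Ro = root 4 (Pc / (k * G))"
    by (simp add: Ro_def Ropt_def k_def G_def)
  then have "Ro \<ge> 0" "Ro^2 = sqrt (Pc / (k * G))"
    using kG assms(5) by (simp_all add: root4_power2)
  moreover have "Gam fc c N0 eta0 eta1 a b (Ro * hn / Ro) * Ro^2 = G * Ro^2"
    by (cases "Ro = 0") (simp_all add: G_def)
  ultimately have "Phi fc c N0 eta0 eta1 a b A Eb Pc lam S Ro (Ro * hn)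
      = A / (pi * Eb) * (k * G * sqrt (Pc / (k * G)) + Pc / sqrt (Pc / (k * G)))"
    by (simp add: Phi_scale k_def mult_ac)
  also have "\<dots> = A / (pi * Eb) * (2 * sqrt (k * G * Pc))"
    using add_divide_at_sqrt_ratio[OF kG assms(5)] by simp
  finally show ?thesis
    by (simp add: Ro_def k_def G_def mult_ac)
qed

theorem theorem1:
  fixes fc c N0 eta0 eta1 a b A Eb Pc lam S hn :: real
    and \<kappa> :: nat and Ab lamb :: "nat \<Rightarrow> real"
  assumes "fc > 0" "c > 0" "N0 > 0" "eta0 > 0" "eta1 > 0" "a > 0" "b > 0"
    and "A > 0" "Eb > 0" "Pc > 0" "lam > 0" "S > 0"
    and "hn \<ge> 0"
    and hmin: "\<forall>x\<ge>0. Gam fc c N0 eta0 eta1 a b hn \<le> Gam fc c N0 eta0 eta1 a b x"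
    and "\<forall>\<beta>\<in>{1..\<kappa>}. Ab \<beta> > 0 \<and> lamb \<beta> > 0"
  shows "(\<forall>R h. R > 0 \<longrightarrow> h \<ge> 0 \<longrightarrow>
            Phi fc c N0 eta0 eta1 a b A Eb Pc lam S R h
              \<ge> 2 * A / (pi * Eb) * sqrt (lam * (2 powr S - 1) * Pc * Gam fc c N0 eta0 eta1 a b hn))
       \<and> Phi fc c N0 eta0 eta1 a b A Eb Pc lam S
            (Ropt fc c N0 eta0 eta1 a b Pc lam S hn)
            (Ropt fc c N0 eta0 eta1 a b Pc lam S hn * hn)
          = 2 * A / (pi * Eb) * sqrt (lam * (2 powr S - 1) * Pc * Gam fc c N0 eta0 eta1 a b hn)
       \<and> (\<forall>R h :: nat \<Rightarrow> real. (\<forall>\<beta>\<in>{1..\<kappa>}. R \<beta> > 0 \<and> h \<beta> \<ge> 0) \<longrightarrow>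
            (\<Sum>\<beta>=1..\<kappa>. Phi fc c N0 eta0 eta1 a b (Ab \<beta>) Eb Pc (lamb \<beta>) S
                 (Ropt fc c N0 eta0 eta1 a b Pc (lamb \<beta>) S hn)
                 (Ropt fc c N0 eta0 eta1 a b Pc (lamb \<beta>) S hn * hn))
            \<le> (\<Sum>\<beta>=1..\<kappa>. Phi fc c N0 eta0 eta1 a b (Ab \<beta>) Eb Pc (lamb \<beta>) S (R \<beta>) (h \<beta>)))"
proof -
  have lower: "2 * A' / (pi * Eb) * sqrt (lam' * (2 powr S - 1) * Pc * Gam fc c N0 eta0 eta1 a b hn)
      \<le> Phi fc c N0 eta0 eta1 a b A' Eb Pc lam' S R h"
    if "A' > 0" "lam' > 0" "R > 0" "h \<ge> 0" for A' lam' R h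
    using Phi_ge_two_sqrt[OF assms(3-6) _ _ _ _ _ hmin] that assms(9,10,12) by simp
  have opt: "Phi fc c N0 eta0 eta1 a b A' Eb Pc lam' S
       (Ropt fc c N0 eta0 eta1 a b Pc lam' S hn) (Ropt fc c N0 eta0 eta1 a b Pc lam' S hn * hn)
      = 2 * A' / (pi * Eb) * sqrt (lam' * (2 powr S - 1) * Pc * Gam fc c N0 eta0 eta1 a b hn)"
    if "lam' > 0" for A' lam'
    using Phi_Ropt[OF assms(3-6)] that assms(10,12) by simp
  show ?thesis
    using lower[OF assms(8,11)] opt[OF assms(11)] lower opt assms(15)
    by (auto intro!: sum_mono)
qed

end
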